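(* Work in $\mathbf{Sets}$ with a set $S$ and the state monad $T$. Let $(X,h)$ be a $T$-algebra, let $Y=\{h(s'\mapsto (s,x)) \mid s\in S, x\in X\}\subseteq X$, and let $e_X:S\times X\to Y$ be the surjection $(s,x)\mapsto h(s'\mapsto (s,x))$. Let $e_X^*:X\to Y^S$ be its transpose, $e_X^*(x)=\big(s\mapsto h(s'\mapsto (s,x))\big)$. Then $e_X^*$ is a bijection, with inverse $y\mapsto h(s\mapsto (s,y[s]))$.
   Context: $T$ is the monad on $\mathbf{Sets}$ given by $TX=(S\times X)^S$, with unit $\eta_X(x)=(s\mapsto(s,x))$ and multiplication $\mu_X$ sending $s\mapsto (c[s], s'\mapsto (c'[s,s'],x[s,s']))$ to $s\mapsto (c'[s,c[s]],x[s,c[s]])$. A $T$-algebra is a pair $(X,h)$ with $h:TX\to X$ satisfying $h\circ Th=h\circ\mu_X$ and $h\circ\eta_X=\mathrm{id}_X$. Elements of $TX$ are written as maps $s\mapsto(\cdot,\cdot)$ from $S$ to $S\times X$. *)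

theory Defs
  imports "HOL-Library.FuncSet"
begin

definition TF :: "'s set \<Rightarrow> 'x set \<Rightarrow> ('s \<Rightarrow> 's \<times> 'x) set" where
  "TF S X = S \<rightarrow>\<^sub>E (S \<times> X)"

definition etaT :: "'s set \<Rightarrow> 'x \<Rightarrow> ('s \<Rightarrow> 's \<times> 'x)" where
  "etaT S x = (\<lambda>s\<in>S. (s, x))"

definition muT :: "'s set \<Rightarrow> ('s \<Rightarrow> 's \<times> ('s \<Rightarrow> 's \<times> 'x)) \<Rightarrow> ('s \<Rightarrow> 's \<times> 'x)" where
  "muT S F = (\<lambda>s\<in>S. snd (F s) (fst (F s)))"

definition Tmap :: "'s set \<Rightarrow> ('a \<Rightarrow> 'b) \<Rightarrow> ('s \<Rightarrow> 's \<times> 'a) \<Rightarrow> ('s \<Rightarrow> 's \<times> 'b)" where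
  "Tmap S f t = (\<lambda>s\<in>S. (fst (t s), f (snd (t s))))"

definition T_algebra :: "'s set \<Rightarrow> 'x set \<Rightarrow> (('s \<Rightarrow> 's \<times> 'x) \<Rightarrow> 'x) \<Rightarrow> bool" where
  "T_algebra S X h \<longleftrightarrow>
     (\<forall>t\<in>TF S X. h t \<in> X) \<and>
     (\<forall>F\<in>TF S (TF S X). h (Tmap S h F) = h (muT S F)) \<and>
     (\<forall>x\<in>X. h (etaT S x) = x)"

end

theory Submission
  imports Defs
begin

text \<open>The associativity law, applied to the constant family \<open>s' \<mapsto> (s, p)\<close>, says that
  \<open>h (s' \<mapsto> (s, h p)) = h (s' \<mapsto> p s)\<close>: resetting the state to \<open>s\<close> after evaluating \<open>p\<close>
  is the same as running \<open>p\<close> from \<open>s\<close>. With \<open>p = (s' \<mapsto> (t, x))\<close> this shows that every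
  element of \<open>Y\<close> is fixed by resetting the state, which gives \<open>e\<^sup>* \<circ> g = id\<close>. Applied instead
  to the diagonal family \<open>s \<mapsto> (s, s' \<mapsto> (s, x))\<close>, associativity and the unit law give
  \<open>g \<circ> e\<^sup>* = id\<close>.\<close>

abbreviation const_state :: "'s set \<Rightarrow> 's \<Rightarrow> 'x \<Rightarrow> ('s \<Rightarrow> 's \<times> 'x)" where
  "const_state S s x \<equiv> \<lambda>s'\<in>S. (s, x)"

lemma T_algebra_closed: "T_algebra S X h \<Longrightarrow> t \<in> TF S X \<Longrightarrow> h t \<in> X"
  unfolding T_algebra_def by blast

lemma T_algebra_assoc:
  "T_algebra S X h \<Longrightarrow> F \<in> TF S (TF S X) \<Longrightarrow> h (Tmap S h F) = h (muT S F)"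
  unfolding T_algebra_def by blast

lemma T_algebra_unit: "T_algebra S X h \<Longrightarrow> x \<in> X \<Longrightarrow> h (etaT S x) = x"
  unfolding T_algebra_def by blast

lemma const_state_in_TF: "s \<in> S \<Longrightarrow> x \<in> X \<Longrightarrow> const_state S s x \<in> TF S X"
  by (auto simp: TF_def)

lemma T_algebra_const_state_eval:
  assumes alg: "T_algebra S X h" and p: "p \<in> TF S X" and s: "s \<in> S"
  shows "h (const_state S s (h p)) = h (\<lambda>s'\<in>S. p s)"
proof -
  let ?F = "const_state S s p"
  have "h (Tmap S h ?F) = h (muT S ?F)"
    using T_algebra_assoc[OF alg const_state_in_TF[OF s p]] .
  moreover have "Tmap S h ?F = const_state S s (h p)" by (auto simp: Tmap_def)
  moreover have "muT S ?F = (\<lambda>s'\<in>S. p s)" by (auto simp: muT_def)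
  ultimately show ?thesis by simp
qed

lemma T_algebra_const_state_diagonal:
  assumes alg: "T_algebra S X h" and x: "x \<in> X"
  shows "h (\<lambda>s\<in>S. (s, h (const_state S s x))) = x"
proof -
  let ?F = "\<lambda>s\<in>S. (s, const_state S s x)"
  have F: "?F \<in> TF S (TF S X)" using x by (auto simp: TF_def)
  have "h (\<lambda>s\<in>S. (s, h (const_state S s x))) = h (Tmap S h ?F)"
    by (auto simp: Tmap_def intro!: arg_cong[where f = h])
  also have "\<dots> = h (muT S ?F)" using T_algebra_assoc[OF alg F] .
  also have "muT S ?F = etaT S x" by (auto simp: muT_def etaT_def)
  also have "h (etaT S x) = x" by (rule T_algebra_unit[OF alg x])
  finally show ?thesis .
qed

lemma T_algebra_const_state_image_subset:
  assumes "T_algebra S X h"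
  shows "{h (const_state S s x) | s x. s \<in> S \<and> x \<in> X} \<subseteq> X"
  by (auto intro: T_algebra_closed[OF assms] const_state_in_TF)

lemma T_algebra_const_state_fixes_image:
  assumes alg: "T_algebra S X h"
    and y: "y \<in> {h (const_state S t x) | t x. t \<in> S \<and> x \<in> X}" and s: "s \<in> S"
  shows "h (const_state S s y) = y"
proof -
  obtain t x where yt: "y = h (const_state S t x)" and t: "t \<in> S" and x: "x \<in> X"
    using y by blast
  have "h (const_state S s y) = h (\<lambda>s'\<in>S. const_state S t x s)"
    unfolding yt using T_algebra_const_state_eval[OF alg const_state_in_TF[OF t x] s] .
  also have "\<dots> = y" using s yt by simp
  finally show ?thesis .
qed

lemma T_algebra_diagonal_closed:
  assumes alg: "T_algebra S X h"
    and y: "y \<in> S \<rightarrow>\<^sub>E {h (const_state S t x) | t x. t \<in> S \<and> x \<in> X}"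
  shows "(\<lambda>s\<in>S. (s, y s)) \<in> TF S X"
  using y T_algebra_const_state_image_subset[OF alg] by (auto simp: TF_def)

lemma T_algebra_transpose_right_inverse:
  assumes alg: "T_algebra S X h"
    and y: "y \<in> S \<rightarrow>\<^sub>E {h (const_state S t x) | t x. t \<in> S \<and> x \<in> X}"
  shows "(\<lambda>s\<in>S. h (const_state S s (h (\<lambda>s\<in>S. (s, y s))))) = y"
proof -
  note p = T_algebra_diagonal_closed[OF alg y]
  have "h (const_state S s (h (\<lambda>s\<in>S. (s, y s)))) = y s" if s: "s \<in> S" for s
  proof -
    have "h (const_state S s (h (\<lambda>s\<in>S. (s, y s)))) = h (const_state S s (y s))"
      using T_algebra_const_state_eval[OF alg p s] s by simp
    also have "\<dots> = y s"
      using T_algebra_const_state_fixes_image[OF alg _ s] y s by blast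
    finally show ?thesis .
  qed
  then have "(\<lambda>s\<in>S. h (const_state S s (h (\<lambda>s\<in>S. (s, y s))))) = restrict y S"
    by (rule restrict_ext)
  also have "restrict y S = y" using y by (rule PiE_restrict)
  finally show ?thesis .
qed

theorem mainTheorem2:
  fixes S :: "'s set" and X :: "'x set" and h :: "('s \<Rightarrow> 's \<times> 'x) \<Rightarrow> 'x"
  assumes alg: "T_algebra S X h"
  defines "Y \<equiv> {h (\<lambda>s'\<in>S. (s, x)) | s x. s \<in> S \<and> x \<in> X}"
      and "eStar \<equiv> (\<lambda>x. \<lambda>s\<in>S. h (\<lambda>s'\<in>S. (s, x)))"
      and "g \<equiv> (\<lambda>y. h (\<lambda>s\<in>S. (s, y s)))"
  shows "bij_betw eStar X (S \<rightarrow>\<^sub>E Y)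
         \<and> (\<forall>x\<in>X. g (eStar x) = x)
         \<and> (\<forall>y\<in>S \<rightarrow>\<^sub>E Y. g y \<in> X \<and> eStar (g y) = y)"
proof -
  have g_eStar: "\<forall>x\<in>X. g (eStar x) = x"
    using T_algebra_const_state_diagonal[OF alg] by (simp add: g_def eStar_def cong: restrict_cong)
  have g_closed: "\<forall>y\<in>S \<rightarrow>\<^sub>E Y. g y \<in> X"
    using T_algebra_closed[OF alg] T_algebra_diagonal_closed[OF alg] by (simp add: g_def Y_def)
  have eStar_g: "\<forall>y\<in>S \<rightarrow>\<^sub>E Y. eStar (g y) = y"
    using T_algebra_transpose_right_inverse[OF alg] by (simp add: eStar_def g_def Y_def)
  have "eStar ` X \<subseteq> S \<rightarrow>\<^sub>E Y" unfolding eStar_def Y_def by (auto intro!: exI)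
  then have "bij_betw eStar X (S \<rightarrow>\<^sub>E Y)"
    using g_eStar g_closed eStar_g by (intro bij_betw_byWitness[where f' = g]) auto
  with g_eStar g_closed eStar_g show ?thesis by blast
qed

end
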